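(* If $\{B\}\ \Gamma \vdash M_1 : A$ and $M_1 \longrightarrow_{\mathsf{M}} M_2$, then $[\![M_1]\!] \longrightarrow_{\mathsf{M}} [\![M_2]\!]$.
   Context: $\lambda_{\text{ch}}$ is a concurrent fine-grain call-by-value $\lambda$-calculus with asynchronous channels (types $\mathbf{1}$, $A\to B$, $\mathsf{Chan}(A)$, extended with products, sums, recursive functions and iso-recursive types; primitives $\mathsf{fork}$, $\mathsf{give}$, $\mathsf{take}$, $\mathsf{newCh}$), and $\lambda_{\text{act}}$ the analogous actor calculus (primitives $\mathsf{spawn}$, $\mathsf{send}$, $\mathsf{receive}$, $\mathsf{self}$; arrows $A \to^{C} B$ annotated with mailbox type $C$). $\longrightarrow_{\mathsf{M}}$ is the deterministic functional term reduction ($\beta$-reduction, let-return, pair/case/unroll elimination, closed under evaluation contexts). The judgement $\{B\}\ \Gamma \vdash M : A$ means $M$ is a well-typed $\lambda_{\text{ch}}$ term in which all channels have the single type $B$ (written $\mathsf{Chan}$). $[\![-]\!]$ is the translation from $\lambda_{\text{ch}}$ into $\lambda_{\text{act}}$ (with respect to the channel type $B$): on types $[\![\mathsf{Chan}]\!] = \mathsf{ActorRef}([\![B]\!] + \mathsf{ActorRef}([\![B]\!]))$ and $[\![A\to A']\!] = [\![A]\!] \to^{[\![B]\!]} [\![A']\!]$; it is homomorphic on values and functional terms, and translates $\mathsf{fork}\,M$ to spawning $[\![M]\!]$ and returning unit, $\mathsf{give}\,V\,W$ to $\mathsf{send}\,(\mathsf{inl}\,[\![V]\!])\,[\![W]\!]$,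 $\mathsf{take}\,V$ to sending $\mathsf{inr}$ of own pid to $[\![V]\!]$ then $\mathsf{receive}$, and $\mathsf{newCh}$ to spawning an actor running a channel-emulating loop. *)

theory Defs
  imports Main
begin

section \<open>lambda_ch (restricted: all channels have one type B, written Chan)\<close>

text \<open>Binders: CLam binds 0; CRec binds
  0 = argument x, 1 = the function f; CLet N binds 0 in N; CLetPair V M binds
  0 = second component, 1 = first component in M; each CCase branch binds 0.\<close>

datatype ch_ty = CTUnit | CTFun ch_ty ch_ty | CTChan | CTProd ch_ty ch_ty
  | CTSum ch_ty ch_ty | CTMu ch_ty | CTVar nat

datatype ch_val = CVar nat | CLam ch_tm | CUnitV | CPair ch_val ch_val
  | CInl ch_val | CInr ch_val | CRec ch_tm | CRoll ch_val
and ch_tm = CApp ch_val ch_val | CLet ch_tm ch_tm | CReturn ch_val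
  | CLetPair ch_val ch_tm | CCase ch_val ch_tm ch_tm | CUnroll ch_val
  | CFork ch_tm | CGive ch_val ch_val | CTake ch_val | CNewCh

primrec ty_lift :: "nat \<Rightarrow> ch_ty \<Rightarrow> ch_ty" where
  "ty_lift c CTUnit = CTUnit"
| "ty_lift c (CTFun A B) = CTFun (ty_lift c A) (ty_lift c B)"
| "ty_lift c CTChan = CTChan"
| "ty_lift c (CTProd A B) = CTProd (ty_lift c A) (ty_lift c B)"
| "ty_lift c (CTSum A B) = CTSum (ty_lift c A) (ty_lift c B)"
| "ty_lift c (CTMu A) = CTMu (ty_lift (Suc c) A)"
| "ty_lift c (CTVar i) = (if c \<le> i then CTVar (Suc i) else CTVar i)"

primrec ty_subst :: "ch_ty \<Rightarrow> ch_ty \<Rightarrow> nat \<Rightarrow> ch_ty" where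
  "ty_subst CTUnit S k = CTUnit"
| "ty_subst (CTFun A B) S k = CTFun (ty_subst A S k) (ty_subst B S k)"
| "ty_subst CTChan S k = CTChan"
| "ty_subst (CTProd A B) S k = CTProd (ty_subst A S k) (ty_subst B S k)"
| "ty_subst (CTSum A B) S k = CTSum (ty_subst A S k) (ty_subst B S k)"
| "ty_subst (CTMu A) S k = CTMu (ty_subst A (ty_lift 0 S) (Suc k))"
| "ty_subst (CTVar i) S k =
     (if i < k then CTVar i else if i = k then S else CTVar (i - 1))"

definition ty_unfold :: "ch_ty \<Rightarrow> ch_ty" where
  "ty_unfold A = ty_subst A (CTMu A) 0"

inductive ch_vtype :: "ch_ty \<Rightarrow> ch_ty list \<Rightarrow> ch_val \<Rightarrow> ch_ty \<Rightarrow> bool"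
  and ch_type :: "ch_ty \<Rightarrow> ch_ty list \<Rightarrow> ch_tm \<Rightarrow> ch_ty \<Rightarrow> bool"
  for B :: ch_ty where
  T_Var: "i < length \<Gamma> \<Longrightarrow> \<Gamma> ! i = A \<Longrightarrow> ch_vtype B \<Gamma> (CVar i) A"
| T_Abs: "ch_type B (A # \<Gamma>) M A' \<Longrightarrow> ch_vtype B \<Gamma> (CLam M) (CTFun A A')"
| T_Unit: "ch_vtype B \<Gamma> CUnitV CTUnit"
| T_Pair: "ch_vtype B \<Gamma> V A \<Longrightarrow> ch_vtype B \<Gamma> W A' \<Longrightarrow>
     ch_vtype B \<Gamma> (CPair V W) (CTProd A A')"
| T_Inl: "ch_vtype B \<Gamma> V A \<Longrightarrow> ch_vtype B \<Gamma> (CInl V) (CTSum A A')"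
| T_Inr: "ch_vtype B \<Gamma> V A' \<Longrightarrow> ch_vtype B \<Gamma> (CInr V) (CTSum A A')"
| T_Rec: "ch_type B (A # CTFun A A' # \<Gamma>) M A' \<Longrightarrow> ch_vtype B \<Gamma> (CRec M) (CTFun A A')"
| T_Roll: "ch_vtype B \<Gamma> V (ty_unfold A) \<Longrightarrow> ch_vtype B \<Gamma> (CRoll V) (CTMu A)"
| T_App: "ch_vtype B \<Gamma> V (CTFun A A') \<Longrightarrow> ch_vtype B \<Gamma> W A \<Longrightarrow>
     ch_type B \<Gamma> (CApp V W) A'"
| T_Let: "ch_type B \<Gamma> M A \<Longrightarrow> ch_type B (A # \<Gamma>) N A' \<Longrightarrow>
     ch_type B \<Gamma> (CLet M N) A'"
| T_Return: "ch_vtype B \<Gamma> V A \<Longrightarrow> ch_type B \<Gamma> (CReturn V) A"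
| T_LetPair: "ch_vtype B \<Gamma> V (CTProd A A') \<Longrightarrow> ch_type B (A' # A # \<Gamma>) M C \<Longrightarrow>
     ch_type B \<Gamma> (CLetPair V M) C"
| T_Case: "ch_vtype B \<Gamma> V (CTSum A A') \<Longrightarrow> ch_type B (A # \<Gamma>) M C \<Longrightarrow>
     ch_type B (A' # \<Gamma>) N C \<Longrightarrow> ch_type B \<Gamma> (CCase V M N) C"
| T_Unroll: "ch_vtype B \<Gamma> V (CTMu A) \<Longrightarrow> ch_type B \<Gamma> (CUnroll V) (ty_unfold A)"
| T_Fork: "ch_type B \<Gamma> M CTUnit \<Longrightarrow> ch_type B \<Gamma> (CFork M) CTUnit"
| T_Give: "ch_vtype B \<Gamma> V B \<Longrightarrow> ch_vtype B \<Gamma> W CTChan \<Longrightarrow>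
     ch_type B \<Gamma> (CGive V W) CTUnit"
| T_Take: "ch_vtype B \<Gamma> V CTChan \<Longrightarrow> ch_type B \<Gamma> (CTake V) B"
| T_NewCh: "ch_type B \<Gamma> CNewCh CTChan"

primrec ch_lift_v :: "ch_val \<Rightarrow> nat \<Rightarrow> ch_val"
  and ch_lift_t :: "ch_tm \<Rightarrow> nat \<Rightarrow> ch_tm" where
  "ch_lift_v (CVar i) k = (if i < k then CVar i else CVar (Suc i))"
| "ch_lift_v (CLam M) k = CLam (ch_lift_t M (Suc k))"
| "ch_lift_v CUnitV k = CUnitV"
| "ch_lift_v (CPair V W) k = CPair (ch_lift_v V k) (ch_lift_v W k)"
| "ch_lift_v (CInl V) k = CInl (ch_lift_v V k)"
| "ch_lift_v (CInr V) k = CInr (ch_lift_v V k)"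
| "ch_lift_v (CRec M) k = CRec (ch_lift_t M (Suc (Suc k)))"
| "ch_lift_v (CRoll V) k = CRoll (ch_lift_v V k)"
| "ch_lift_t (CApp V W) k = CApp (ch_lift_v V k) (ch_lift_v W k)"
| "ch_lift_t (CLet M N) k = CLet (ch_lift_t M k) (ch_lift_t N (Suc k))"
| "ch_lift_t (CReturn V) k = CReturn (ch_lift_v V k)"
| "ch_lift_t (CLetPair V M) k = CLetPair (ch_lift_v V k) (ch_lift_t M (Suc (Suc k)))"
| "ch_lift_t (CCase V M N) k = CCase (ch_lift_v V k) (ch_lift_t M (Suc k)) (ch_lift_t N (Suc k))"
| "ch_lift_t (CUnroll V) k = CUnroll (ch_lift_v V k)"
| "ch_lift_t (CFork M) k = CFork (ch_lift_t M k)"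
| "ch_lift_t (CGive V W) k = CGive (ch_lift_v V k) (ch_lift_v W k)"
| "ch_lift_t (CTake V) k = CTake (ch_lift_v V k)"
| "ch_lift_t CNewCh k = CNewCh"

primrec ch_subst_v :: "ch_val \<Rightarrow> ch_val \<Rightarrow> nat \<Rightarrow> ch_val"
  and ch_subst_t :: "ch_tm \<Rightarrow> ch_val \<Rightarrow> nat \<Rightarrow> ch_tm" where
  "ch_subst_v (CVar i) U k =
     (if k < i then CVar (i - 1) else if i = k then U else CVar i)"
| "ch_subst_v (CLam M) U k = CLam (ch_subst_t M (ch_lift_v U 0) (Suc k))"
| "ch_subst_v CUnitV U k = CUnitV"
| "ch_subst_v (CPair V W) U k = CPair (ch_subst_v V U k) (ch_subst_v W U k)"
| "ch_subst_v (CInl V) U k = CInl (ch_subst_v V U k)"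
| "ch_subst_v (CInr V) U k = CInr (ch_subst_v V U k)"
| "ch_subst_v (CRec M) U k =
     CRec (ch_subst_t M (ch_lift_v (ch_lift_v U 0) 0) (Suc (Suc k)))"
| "ch_subst_v (CRoll V) U k = CRoll (ch_subst_v V U k)"
| "ch_subst_t (CApp V W) U k = CApp (ch_subst_v V U k) (ch_subst_v W U k)"
| "ch_subst_t (CLet M N) U k = CLet (ch_subst_t M U k) (ch_subst_t N (ch_lift_v U 0) (Suc k))"
| "ch_subst_t (CReturn V) U k = CReturn (ch_subst_v V U k)"
| "ch_subst_t (CLetPair V M) U k =
     CLetPair (ch_subst_v V U k) (ch_subst_t M (ch_lift_v (ch_lift_v U 0) 0) (Suc (Suc k)))"
| "ch_subst_t (CCase V M N) U k =
     CCase (ch_subst_v V U k) (ch_subst_t M (ch_lift_v U 0) (Suc k))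
       (ch_subst_t N (ch_lift_v U 0) (Suc k))"
| "ch_subst_t (CUnroll V) U k = CUnroll (ch_subst_v V U k)"
| "ch_subst_t (CFork M) U k = CFork (ch_subst_t M U k)"
| "ch_subst_t (CGive V W) U k = CGive (ch_subst_v V U k) (ch_subst_v W U k)"
| "ch_subst_t (CTake V) U k = CTake (ch_subst_v V U k)"
| "ch_subst_t CNewCh U k = CNewCh"

inductive ch_red :: "ch_tm \<Rightarrow> ch_tm \<Rightarrow> bool" where
  E_Lam: "ch_red (CApp (CLam M) V) (ch_subst_t M V 0)"
| E_Rec: "ch_red (CApp (CRec M) V) (ch_subst_t (ch_subst_t M (ch_lift_v V 0) 0) (CRec M) 0)"
| E_Let: "ch_red (CLet (CReturn V) M) (ch_subst_t M V 0)"
| E_Pair: "ch_red (CLetPair (CPair V W) M) (ch_subst_t (ch_subst_t M (ch_lift_v W 0) 0) V 0)"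
| E_Inl: "ch_red (CCase (CInl V) M N) (ch_subst_t M V 0)"
| E_Inr: "ch_red (CCase (CInr V) M N) (ch_subst_t N V 0)"
| E_Unroll: "ch_red (CUnroll (CRoll V)) (CReturn V)"
| E_Lift: "ch_red M M' \<Longrightarrow> ch_red (CLet M N) (CLet M' N)"

text \<open>Same binding conventions as for lambda_ch.\<close>

datatype act_ty = ATUnit | ATFun act_ty act_ty act_ty | ATActorRef act_ty
  | ATProd act_ty act_ty | ATSum act_ty act_ty | ATMu act_ty | ATVar nat

datatype act_val = AVar nat | ALam act_tm | AUnitV | APair act_val act_val
  | AInl act_val | AInr act_val | ARec act_tm | ARoll act_val
and act_tm = AApp act_val act_val | ALet act_tm act_tm | AReturn act_val
  | ALetPair act_val act_tm | ACase act_val act_tm act_tm | AUnroll act_val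
  | ASpawn act_tm | ASend act_val act_val | AReceive | ASelf

primrec act_lift_v :: "act_val \<Rightarrow> nat \<Rightarrow> act_val"
  and act_lift_t :: "act_tm \<Rightarrow> nat \<Rightarrow> act_tm" where
  "act_lift_v (AVar i) k = (if i < k then AVar i else AVar (Suc i))"
| "act_lift_v (ALam M) k = ALam (act_lift_t M (Suc k))"
| "act_lift_v AUnitV k = AUnitV"
| "act_lift_v (APair V W) k = APair (act_lift_v V k) (act_lift_v W k)"
| "act_lift_v (AInl V) k = AInl (act_lift_v V k)"
| "act_lift_v (AInr V) k = AInr (act_lift_v V k)"
| "act_lift_v (ARec M) k = ARec (act_lift_t M (Suc (Suc k)))"
| "act_lift_v (ARoll V) k = ARoll (act_lift_v V k)"
| "act_lift_t (AApp V W) k = AApp (act_lift_v V k) (act_lift_v W k)"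
| "act_lift_t (ALet M N) k = ALet (act_lift_t M k) (act_lift_t N (Suc k))"
| "act_lift_t (AReturn V) k = AReturn (act_lift_v V k)"
| "act_lift_t (ALetPair V M) k = ALetPair (act_lift_v V k) (act_lift_t M (Suc (Suc k)))"
| "act_lift_t (ACase V M N) k = ACase (act_lift_v V k) (act_lift_t M (Suc k)) (act_lift_t N (Suc k))"
| "act_lift_t (AUnroll V) k = AUnroll (act_lift_v V k)"
| "act_lift_t (ASpawn M) k = ASpawn (act_lift_t M k)"
| "act_lift_t (ASend V W) k = ASend (act_lift_v V k) (act_lift_v W k)"
| "act_lift_t AReceive k = AReceive"
| "act_lift_t ASelf k = ASelf"

primrec act_subst_v :: "act_val \<Rightarrow> act_val \<Rightarrow> nat \<Rightarrow> act_val"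
  and act_subst_t :: "act_tm \<Rightarrow> act_val \<Rightarrow> nat \<Rightarrow> act_tm" where
  "act_subst_v (AVar i) U k =
     (if k < i then AVar (i - 1) else if i = k then U else AVar i)"
| "act_subst_v (ALam M) U k = ALam (act_subst_t M (act_lift_v U 0) (Suc k))"
| "act_subst_v AUnitV U k = AUnitV"
| "act_subst_v (APair V W) U k = APair (act_subst_v V U k) (act_subst_v W U k)"
| "act_subst_v (AInl V) U k = AInl (act_subst_v V U k)"
| "act_subst_v (AInr V) U k = AInr (act_subst_v V U k)"
| "act_subst_v (ARec M) U k =
     ARec (act_subst_t M (act_lift_v (act_lift_v U 0) 0) (Suc (Suc k)))"
| "act_subst_v (ARoll V) U k = ARoll (act_subst_v V U k)"
| "act_subst_t (AApp V W) U k = AApp (act_subst_v V U k) (act_subst_v W U k)"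
| "act_subst_t (ALet M N) U k = ALet (act_subst_t M U k) (act_subst_t N (act_lift_v U 0) (Suc k))"
| "act_subst_t (AReturn V) U k = AReturn (act_subst_v V U k)"
| "act_subst_t (ALetPair V M) U k =
     ALetPair (act_subst_v V U k) (act_subst_t M (act_lift_v (act_lift_v U 0) 0) (Suc (Suc k)))"
| "act_subst_t (ACase V M N) U k =
     ACase (act_subst_v V U k) (act_subst_t M (act_lift_v U 0) (Suc k))
       (act_subst_t N (act_lift_v U 0) (Suc k))"
| "act_subst_t (AUnroll V) U k = AUnroll (act_subst_v V U k)"
| "act_subst_t (ASpawn M) U k = ASpawn (act_subst_t M U k)"
| "act_subst_t (ASend V W) U k = ASend (act_subst_v V U k) (act_subst_v W U k)"
| "act_subst_t AReceive U k = AReceive"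
| "act_subst_t ASelf U k = ASelf"

inductive act_red :: "act_tm \<Rightarrow> act_tm \<Rightarrow> bool" where
  A_Lam: "act_red (AApp (ALam M) V) (act_subst_t M V 0)"
| A_Rec: "act_red (AApp (ARec M) V) (act_subst_t (act_subst_t M (act_lift_v V 0) 0) (ARec M) 0)"
| A_Let: "act_red (ALet (AReturn V) M) (act_subst_t M V 0)"
| A_Pair: "act_red (ALetPair (APair V W) M) (act_subst_t (act_subst_t M (act_lift_v W 0) 0) V 0)"
| A_Inl: "act_red (ACase (AInl V) M N) (act_subst_t M V 0)"
| A_Inr: "act_red (ACase (AInr V) M N) (act_subst_t N V 0)"
| A_Unroll: "act_red (AUnroll (ARoll V)) (AReturn V)"
| A_Lift: "act_red M M' \<Longrightarrow> act_red (ALet M N) (ALet M' N)"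

section \<open>The channel-emulating actor (lists as mu X. 1 + (A x X))\<close>

definition act_nil :: act_val where "act_nil = ARoll (AInl AUnitV)"
definition act_single :: "act_val \<Rightarrow> act_val" where
  "act_single v = ARoll (AInr (APair v act_nil))"

text \<open>append: rec app(p). let (xs,ys) = p in let u <= unroll xs in
  case u {inl _ -> return ys; inr c -> let (h,t) = c in
          let r <= app (t,ys) in return (roll (inr (h,r)))}\<close>
definition act_append :: act_val where
  "act_append = ARec
     (ALetPair (AVar 0)
       (ALet (AUnroll (AVar 1))
         (ACase (AVar 0) (AReturn (AVar 2))
           (ALetPair (AVar 0)
             (ALet (AApp (AVar 7) (APair (AVar 0) (AVar 4)))
               (AReturn (ARoll (AInr (APair (AVar 2) (AVar 0))))))))))"

text \<open>drain: \<lambda>x. let (vals,pids) = x in case vals {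
  [] -> return (vals,pids);
  v :: vs -> case pids { [] -> return (vals,pids);
                         pid :: pids' -> send v pid; return (vs,pids') }}\<close>
definition act_drain :: act_val where
  "act_drain = ALam
     (ALetPair (AVar 0)
       (ALet (AUnroll (AVar 1))
         (ACase (AVar 0) (AReturn (APair (AVar 3) (AVar 2)))
           (ALetPair (AVar 0)
             (ALet (AUnroll (AVar 4))
               (ACase (AVar 0) (AReturn (APair (AVar 7) (AVar 6)))
                 (ALetPair (AVar 0)
                   (ALet (ASend (AVar 5) (AVar 1))
                     (AReturn (APair (AVar 5) (AVar 1)))))))))))"

text \<open>body: rec g(state). let recvVal <= receive in let (vals,pids) = state in
  case recvVal {
    inl v -> let vals' <= vals ++ [v] in let state' <= drain (vals',pids) in g state'
    inr pid -> let pids' <= pids ++ [pid] in let state' <= drain (vals,pids') in g state'}\<close>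
definition act_body :: act_val where
  "act_body = ARec
     (ALet AReceive
       (ALetPair (AVar 1)
         (ACase (AVar 2)
           (ALet (AApp act_append (APair (AVar 2) (act_single (AVar 0))))
             (ALet (AApp act_drain (APair (AVar 0) (AVar 2)))
               (AApp (AVar 7) (AVar 0))))
           (ALet (AApp act_append (APair (AVar 1) (act_single (AVar 0))))
             (ALet (AApp act_drain (APair (AVar 3) (AVar 0)))
               (AApp (AVar 7) (AVar 0)))))))"

primrec tr_v :: "ch_val \<Rightarrow> act_val"
  and tr_t :: "ch_tm \<Rightarrow> act_tm" where
  "tr_v (CVar i) = AVar i"
| "tr_v (CLam M) = ALam (tr_t M)"
| "tr_v CUnitV = AUnitV"
| "tr_v (CPair V W) = APair (tr_v V) (tr_v W)"
| "tr_v (CInl V) = AInl (tr_v V)"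
| "tr_v (CInr V) = AInr (tr_v V)"
| "tr_v (CRec M) = ARec (tr_t M)"
| "tr_v (CRoll V) = ARoll (tr_v V)"
| "tr_t (CApp V W) = AApp (tr_v V) (tr_v W)"
| "tr_t (CLet M N) = ALet (tr_t M) (tr_t N)"
| "tr_t (CReturn V) = AReturn (tr_v V)"
| "tr_t (CLetPair V M) = ALetPair (tr_v V) (tr_t M)"
| "tr_t (CCase V M N) = ACase (tr_v V) (tr_t M) (tr_t N)"
| "tr_t (CUnroll V) = AUnroll (tr_v V)"
| "tr_t (CFork M) = ALet (ASpawn (tr_t M)) (AReturn AUnitV)"
| "tr_t (CGive V W) = ASend (AInl (tr_v V)) (tr_v W)"
| "tr_t (CTake V) =
     ALet ASelf (ALet (ASend (AInr (AVar 0)) (act_lift_v (tr_v V) 0)) AReceive)"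
| "tr_t CNewCh = ASpawn (AApp act_body (APair act_nil act_nil))"

end

theory Submission
  imports Defs
begin

text \<open>The translation is homomorphic on the functional fragment, and the only non-homomorphic
  clauses (for fork, give, take and newCh) introduce either closed actor code or a binder
  under which the translated value is lifted. Hence translation commutes with lifting and with
  substitution, and every functional redex is mapped to the corresponding actor redex.\<close>

lemma act_lift_lift:
  "j \<le> i \<Longrightarrow> act_lift_v (act_lift_v V i) j = act_lift_v (act_lift_v V j) (Suc i)"
  "j \<le> i \<Longrightarrow> act_lift_t (act_lift_t M i) j = act_lift_t (act_lift_t M j) (Suc i)"
  by (induction V and M arbitrary: i j and i j) auto

lemma act_subst_lift:
  "j \<le> k \<Longrightarrow>
     act_subst_v (act_lift_v V j) (act_lift_v U j) (Suc k) = act_lift_v (act_subst_v V U k) j"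
  "j \<le> k \<Longrightarrow>
     act_subst_t (act_lift_t M j) (act_lift_v U j) (Suc k) = act_lift_t (act_subst_t M U k) j"
  by (induction V and M arbitrary: U j k and U j k) (auto simp: act_lift_lift)

lemma act_lift_act_nil: "act_lift_v act_nil k = act_nil"
  and act_lift_act_body: "act_lift_v act_body k = act_body"
  and act_subst_act_nil: "act_subst_v act_nil U k = act_nil"
  and act_subst_act_body: "act_subst_v act_body U k = act_body"
  by (simp_all add: act_body_def act_append_def act_drain_def act_single_def act_nil_def)

lemma tr_ch_lift:
  "tr_v (ch_lift_v V k) = act_lift_v (tr_v V) k"
  "tr_t (ch_lift_t M k) = act_lift_t (tr_t M) k"
  by (induction V and M arbitrary: k and k)
     (auto simp: act_lift_lift act_lift_act_nil act_lift_act_body)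

lemma tr_ch_subst:
  "tr_v (ch_subst_v V U k) = act_subst_v (tr_v V) (tr_v U) k"
  "tr_t (ch_subst_t M U k) = act_subst_t (tr_t M) (tr_v U) k"
  by (induction V and M arbitrary: U k and U k)
     (auto simp: tr_ch_lift act_subst_lift act_subst_act_nil act_subst_act_body)

lemma act_red_tr_ch_red:
  assumes "ch_red M M'"
  shows "act_red (tr_t M) (tr_t M')"
  using assms
  by induction (auto simp: tr_ch_subst tr_ch_lift intro: act_red.intros)

theorem lemma25:
  assumes "ch_type B \<Gamma> M1 A"
    and "ch_red M1 M2"
  shows "act_red (tr_t M1) (tr_t M2)"
  using assms(2) by (rule act_red_tr_ch_red)

end
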